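(* Let $G$ and $H$ be groups such that the power quandles $\mathrm{Pq}(G)$ and $\mathrm{Pq}(H)$ are isomorphic. Then the central quotients are isomorphic as groups: $G/\mathrm{Z}(G)\cong H/\mathrm{Z}(H)$.
   Context: A power quandle $(P,\rhd,\pi,e)$ consists of a set $P$, a binary operation $\rhd$, an element $e$, and maps $\pi^n\colon P\to P$ ($n\in\mathbb{Z}$) satisfying: each $\lambda_a\colon b\mapsto a\rhd b$ is bijective and $a\rhd(b\rhd c)=(a\rhd b)\rhd(a\rhd c)$; $a\rhd a=a$; $e\rhd b=b$, $a\rhd e=e$; $\pi^1=\mathrm{id}$, $\pi^m\circ\pi^n=\pi^{mn}$; $\pi^0(a)=e$; $a\rhd\pi^n(b)=\pi^n(a\rhd b)$; $\pi^n(a)\rhd b=\lambda_a^n(b)$. An isomorphism of power quandles is a bijection preserving $\rhd$, all $\pi^n$ and $e$. For a group $G$, $\mathrm{Pq}(G)$ is the power quandle on the underlying set of $G$ with $a\rhd b=aba^{-1}$, $\pi^n(a)=a^n$, and $e$ the identity element. $\mathrm{Z}(G)$ denotes the center of $G$. *)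

theory Defs
  imports "HOL-Algebra.Algebra"
begin

definition group_center :: "('a, 'b) monoid_scheme \<Rightarrow> 'a set" where
  "group_center G = {z \<in> carrier G. \<forall>g \<in> carrier G. z \<otimes>\<^bsub>G\<^esub> g = g \<otimes>\<^bsub>G\<^esub> z}"

definition pq_op :: "('a, 'b) monoid_scheme \<Rightarrow> 'a \<Rightarrow> 'a \<Rightarrow> 'a" where
  "pq_op G a b = a \<otimes>\<^bsub>G\<^esub> b \<otimes>\<^bsub>G\<^esub> inv\<^bsub>G\<^esub> a"

definition pq_pow :: "('a, 'b) monoid_scheme \<Rightarrow> int \<Rightarrow> 'a \<Rightarrow> 'a" where
  "pq_pow G n a = a [^]\<^bsub>G\<^esub> n"

definition pq_iso :: "('a, 'c) monoid_scheme \<Rightarrow> ('b, 'd) monoid_scheme \<Rightarrow> ('a \<Rightarrow> 'b) \<Rightarrow> bool" where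
  "pq_iso G H f \<longleftrightarrow>
     bij_betw f (carrier G) (carrier H) \<and>
     (\<forall>a \<in> carrier G. \<forall>b \<in> carrier G. f (pq_op G a b) = pq_op H (f a) (f b)) \<and>
     (\<forall>n::int. \<forall>a \<in> carrier G. f (pq_pow G n a) = pq_pow H n (f a)) \<and>
     f \<one>\<^bsub>G\<^esub> = \<one>\<^bsub>H\<^esub>"

end

theory Submission
  imports Defs
begin

text \<open>A bijection
  \<open>f\<close> preserving conjugation transports the inner automorphism of \<open>a\<close> to that of
  \<open>f a\<close>, so \<open>f (a b)\<close> and \<open>f a f b\<close> induce the same inner automorphism of \<open>H\<close> and
  \<open>a \<mapsto> Z(H) f a\<close> is a surjective homomorphism \<open>G \<rightarrow> H/Z(H)\<close>. Its kernel
  consists of the \<open>a\<close> with \<open>f a\<close> central, and since centrality means acting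
  trivially by conjugation, this is exactly \<open>Z(G)\<close>.\<close>

lemma (in group) center_subgroup: "subgroup (group_center G) G"
proof (rule subgroupI)
  show "group_center G \<subseteq> carrier G" "group_center G \<noteq> {}"
    by (auto simp: group_center_def intro!: exI[of _ \<one>])
next
  fix a assume "a \<in> group_center G"
  then have a: "a \<in> carrier G" and comm: "\<And>g. g \<in> carrier G \<Longrightarrow> a \<otimes> g = g \<otimes> a"
    by (auto simp: group_center_def)
  have "inv a \<otimes> g = g \<otimes> inv a" if g: "g \<in> carrier G" for g
  proof -
    have "inv a \<otimes> g = inv a \<otimes> (g \<otimes> a) \<otimes> inv a" using a g by (simp add: m_assoc)
    also have "\<dots> = inv a \<otimes> (a \<otimes> g) \<otimes> inv a" using comm[OF g] by simp
    also have "\<dots> = g \<otimes> inv a" using a g by (simp add: m_assoc[symmetric])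
    finally show ?thesis .
  qed
  then show "inv a \<in> group_center G" using a by (auto simp: group_center_def)
next
  fix a b assume "a \<in> group_center G" "b \<in> group_center G"
  then have ab: "a \<in> carrier G" "b \<in> carrier G"
    and comm: "\<And>g. g \<in> carrier G \<Longrightarrow> a \<otimes> g = g \<otimes> a"
              "\<And>g. g \<in> carrier G \<Longrightarrow> b \<otimes> g = g \<otimes> b"
    by (auto simp: group_center_def)
  have "a \<otimes> b \<otimes> g = g \<otimes> (a \<otimes> b)" if g: "g \<in> carrier G" for g
  proof -
    have "a \<otimes> b \<otimes> g = a \<otimes> g \<otimes> b" using ab g comm(2)[OF g] by (simp add: m_assoc)
    also have "\<dots> = g \<otimes> (a \<otimes> b)" using ab g comm(1)[OF g] by (simp add: m_assoc)
    finally show ?thesis .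
  qed
  then show "a \<otimes> b \<in> group_center G" using ab by (auto simp: group_center_def)
qed

lemma (in group) center_normal: "group_center G \<lhd> G"
proof -
  have "x \<otimes> z \<otimes> inv x = z" if x: "x \<in> carrier G" and "z \<in> group_center G" for x z
  proof -
    have "z \<in> carrier G" "x \<otimes> z = z \<otimes> x" using that by (auto simp: group_center_def)
    then show ?thesis using x by (simp add: m_assoc)
  qed
  then show ?thesis using normal_inv_iff center_subgroup by auto
qed

lemma (in group) pq_op_closed [simp]:
  "a \<in> carrier G \<Longrightarrow> b \<in> carrier G \<Longrightarrow> pq_op G a b \<in> carrier G"
  by (simp add: pq_op_def)

lemma (in group) pq_op_mult:
  assumes "a \<in> carrier G" "b \<in> carrier G" "g \<in> carrier G"
  shows "pq_op G (a \<otimes> b) g = pq_op G a (pq_op G b g)"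
  using assms by (simp add: pq_op_def inv_mult_group m_assoc)

lemma (in group) group_center_iff_pq_op:
  "a \<in> group_center G \<longleftrightarrow> a \<in> carrier G \<and> (\<forall>g \<in> carrier G. pq_op G a g = g)"
proof -
  have "a \<otimes> g \<otimes> inv a = g \<longleftrightarrow> a \<otimes> g = g \<otimes> a"
    if "a \<in> carrier G" "g \<in> carrier G" for g
    using that by (metis inv_solve_right m_closed)
  then show ?thesis by (auto simp: group_center_def pq_op_def)
qed

lemma (in group) rcos_center_eq_if_same_conj:
  assumes x: "x \<in> carrier G" and y: "y \<in> carrier G"
    and same: "\<And>g. g \<in> carrier G \<Longrightarrow> pq_op G x g = pq_op G y g"
  shows "group_center G #> x = group_center G #> y"
proof -
  have "pq_op G (x \<otimes> inv y) g = g" if g: "g \<in> carrier G" for g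
  proof -
    have "pq_op G (x \<otimes> inv y) g = pq_op G y (pq_op G (inv y) g)"
      using x y g by (simp add: pq_op_mult same)
    also have "\<dots> = g"
      using y g by (simp add: pq_op_def m_assoc) (simp add: m_assoc[symmetric])
    finally show ?thesis .
  qed
  then have "x \<otimes> inv y \<in> group_center G"
    using x y by (simp add: group_center_iff_pq_op)
  then have "x \<in> group_center G #> y"
    using subgroup.rcos_module_rev[OF center_subgroup] x y is_group by blast
  then show ?thesis
    using repr_independence[OF _ y center_subgroup] by simp
qed

locale conj_quandle_iso = G: group G + H: group H
  for G :: "('a, 'c) monoid_scheme" and H :: "('b, 'd) monoid_scheme" and f :: "'a \<Rightarrow> 'b" +
  assumes bij: "bij_betw f (carrier G) (carrier H)"
    and pq_op_preserved:
      "\<And>a b. a \<in> carrier G \<Longrightarrow> b \<in> carrier G \<Longrightarrow> f (pq_op G a b) = pq_op H (f a) (f b)"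
begin

lemma closed [simp]: "a \<in> carrier G \<Longrightarrow> f a \<in> carrier H"
  using bij by (auto simp: bij_betw_def)

lemma surj: "f ` carrier G = carrier H"
  using bij by (simp add: bij_betw_def)

lemma image_mem_center_iff: "a \<in> carrier G \<Longrightarrow> f a \<in> group_center H \<longleftrightarrow> a \<in> group_center G"
proof -
  assume a: "a \<in> carrier G"
  have "pq_op G a g = g \<longleftrightarrow> pq_op H (f a) (f g) = f g" if g: "g \<in> carrier G" for g
    using a g bij pq_op_preserved[OF a g] inj_on_eq_iff[of f "carrier G" "pq_op G a g" g]
    by (simp add: bij_betw_def)
  then have "(\<forall>g \<in> carrier G. pq_op G a g = g) \<longleftrightarrow> (\<forall>y \<in> carrier H. pq_op H (f a) y = y)"
    unfolding surj[symmetric] by simp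
  then show ?thesis
    using a by (simp add: G.group_center_iff_pq_op H.group_center_iff_pq_op)
qed

lemma rcos_center_mult:
  assumes a: "a \<in> carrier G" and b: "b \<in> carrier G"
  shows "group_center H #>\<^bsub>H\<^esub> f (a \<otimes>\<^bsub>G\<^esub> b) = group_center H #>\<^bsub>H\<^esub> (f a \<otimes>\<^bsub>H\<^esub> f b)"
proof (rule H.rcos_center_eq_if_same_conj)
  fix y assume "y \<in> carrier H"
  then obtain g where g: "g \<in> carrier G" "y = f g" using surj by auto
  have "pq_op H (f (a \<otimes>\<^bsub>G\<^esub> b)) (f g) = f (pq_op G (a \<otimes>\<^bsub>G\<^esub> b) g)"
    using a b g by (simp add: pq_op_preserved)
  also have "\<dots> = f (pq_op G a (pq_op G b g))"
    using a b g by (simp add: G.pq_op_mult)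
  also have "\<dots> = pq_op H (f a) (pq_op H (f b) (f g))"
    using a b g by (simp add: pq_op_preserved)
  also have "\<dots> = pq_op H (f a \<otimes>\<^bsub>H\<^esub> f b) (f g)"
    using a b g by (simp add: H.pq_op_mult)
  finally show "pq_op H (f (a \<otimes>\<^bsub>G\<^esub> b)) y = pq_op H (f a \<otimes>\<^bsub>H\<^esub> f b) y"
    using g by simp
qed (use a b in auto)

definition central_quotient_map :: "'a \<Rightarrow> 'b set" where
  "central_quotient_map a = group_center H #>\<^bsub>H\<^esub> f a"

lemma central_quotient_map_group_hom:
  "group_hom G (H Mod group_center H) central_quotient_map"
proof -
  interpret Z: normal "group_center H" H by (rule H.center_normal)
  have "central_quotient_map \<in> hom G (H Mod group_center H)"
    by (rule homI)
      (auto simp: central_quotient_map_def FactGroup_def RCOSETS_def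
        rcos_center_mult Z.rcos_sum)
  then show ?thesis
    using Z.factorgroup_is_group by (simp add: group_hom_def group_hom_axioms_def G.is_group)
qed

lemma central_quotient_map_surj:
  "central_quotient_map ` carrier G = carrier (H Mod group_center H)"
  by (simp add: central_quotient_map_def carrier_FactGroup surj[symmetric] image_image)

lemma kernel_central_quotient_map:
  "kernel G (H Mod group_center H) central_quotient_map = group_center G"
proof -
  have "group_center H #>\<^bsub>H\<^esub> f a = group_center H \<longleftrightarrow> a \<in> group_center G"
    if a: "a \<in> carrier G" for a
    using H.coset_join1[OF _ closed[OF a] H.center_subgroup]
      H.coset_join2[OF closed[OF a] H.center_subgroup] image_mem_center_iff[OF a] by blast
  moreover have "group_center G \<subseteq> carrier G" by (simp add: group_center_def)
  ultimately show ?thesis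
    by (auto simp: kernel_def central_quotient_map_def FactGroup_def)
qed

theorem central_quotients_iso: "G Mod group_center G \<cong> H Mod group_center H"
  using group_hom.FactGroup_iso[OF central_quotient_map_group_hom central_quotient_map_surj]
  by (simp add: kernel_central_quotient_map)

end

lemma pq_iso_imp_conj_quandle_iso:
  "group G \<Longrightarrow> group H \<Longrightarrow> pq_iso G H f \<Longrightarrow> conj_quandle_iso G H f"
  by (simp add: conj_quandle_iso_def conj_quandle_iso_axioms_def pq_iso_def)

theorem mainTheorem4:
  fixes G :: "('a, 'c) monoid_scheme" and H :: "('b, 'd) monoid_scheme"
  assumes "group G" and "group H"
    and "\<exists>f. pq_iso G H f"
  shows "(G Mod group_center G) \<cong> (H Mod group_center H)"
  using assms conj_quandle_iso.central_quotients_iso pq_iso_imp_conj_quandle_iso by metis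

end
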